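(* Let $G$ be a finite connected $\gamma$-doubling graph and let $\varepsilon>0$. Then Algorithm 1 (with any ranking) has, within $O(\gamma^{\lceil\log_2\frac{2}{\varepsilon}\rceil+1})$ one-to-all distance queries (or at its termination if it terminates earlier), selected a node $u$ with $e(u)\le(1+\varepsilon)\operatorname{rad}(G)$; and Algorithm 3 has, within $O(\gamma^{\lceil\log_2\frac{2}{\varepsilon}\rceil+1})$ one-to-all distance queries (or at its termination if earlier), selected a node $u$ with $e(u)\ge(1-\varepsilon)\operatorname{diam}(G)$. The $O(\cdot)$ hides an absolute constant.
   Context: $G$ is undirected, unweighted, connected with node set $V$; $d$ shortest-path distance; $e(u)=\max_v d(u,v)$; $\operatorname{rad}(G)=\min_u e(u)$, $\operatorname{diam}(G)=\max_u e(u)$; $B[u,\rho]=\{v:d(u,v)\le\rho\}$. $G$ is $\gamma$-doubling if every ball $B[u,\rho]$ is included in the union of at most $\gamma$ balls of radius $\rho/2$. A ranking $r$ is an injective map $V\to$ totally ordered set; $A_r(u)$ is the node $v$ maximizing $(d(u,v),r(v))$ lexicographically. A one-to-all distance query from $x$ computes $(d(x,v))_v$. $e_L(v)=\max_{x\in L}d(v,x)$ ($0$ if $L=\emptyset$), $e^U(v)=\min_{x\in U}(d(v,x)+e(x))$ ($+\infty$ if $U=\emptyset$). Algorithm 1: $L=K=\emptyset$; repeat: select $u$ with $e_L(u)$ minimal; query from $u$, compute $e(u)$; if $e(u)=e_L(u)$ halt outputting $u$; else query from $a=A_r(u)$, add $u$ to $K$, $a$ to $L$; then halt (outputting $c\in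 K$ of minimum eccentricity) if $\min_v e_L(v)\ge\min_{w\in K}e(w)$. Algorithm 3: $U=K=\emptyset$; repeat: select $u$ with $e^U(u)$ maximal; query from $u$, compute $e(u)$, add $u$ to $K$; choose any $x$ with $d(u,x)+e(x)=e(u)$ (e.g. $x=u$), query from $x$, add $x$ to $U$; stop when $\max_{w\in K}e(w)\ge\max_v e^U(v)$. "Selected" means chosen as $u$ in some iteration. *)

theory Defs
  imports "HOL-Analysis.Analysis"
begin

definition is_graph :: "nat set \<Rightarrow> (nat \<Rightarrow> nat \<Rightarrow> bool) \<Rightarrow> bool" where
  "is_graph V E \<longleftrightarrow> finite V \<and> V \<noteq> {} \<and> (\<forall>x y. E x y \<longrightarrow> x \<in> V \<and> y \<in> V)
     \<and> (\<forall>x y. E x y \<longrightarrow> E y x) \<and> (\<forall>x. \<not> E x x)"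

definition connected_graph :: "nat set \<Rightarrow> (nat \<Rightarrow> nat \<Rightarrow> bool) \<Rightarrow> bool" where
  "connected_graph V E \<longleftrightarrow> (\<forall>u\<in>V. \<forall>v\<in>V. \<exists>xs. xs \<noteq> [] \<and> hd xs = u \<and> last xs = v \<and> successively E xs)"

definition gdist :: "(nat \<Rightarrow> nat \<Rightarrow> bool) \<Rightarrow> nat \<Rightarrow> nat \<Rightarrow> nat" where
  "gdist E u v = (LEAST n. \<exists>xs. length xs = Suc n \<and> hd xs = u \<and> last xs = v \<and> successively E xs)"

definition ecc :: "nat set \<Rightarrow> (nat \<Rightarrow> nat \<Rightarrow> bool) \<Rightarrow> nat \<Rightarrow> nat" where
  "ecc V E u = Max (gdist E u ` V)"

definition rad :: "nat set \<Rightarrow> (nat \<Rightarrow> nat \<Rightarrow> bool) \<Rightarrow> nat" where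
  "rad V E = Min (ecc V E ` V)"

definition diam :: "nat set \<Rightarrow> (nat \<Rightarrow> nat \<Rightarrow> bool) \<Rightarrow> nat" where
  "diam V E = Max (ecc V E ` V)"

definition cball_g :: "nat set \<Rightarrow> (nat \<Rightarrow> nat \<Rightarrow> bool) \<Rightarrow> nat \<Rightarrow> real \<Rightarrow> nat set" where
  "cball_g V E u \<rho> = {v \<in> V. real (gdist E u v) \<le> \<rho>}"

definition doubling :: "nat set \<Rightarrow> (nat \<Rightarrow> nat \<Rightarrow> bool) \<Rightarrow> nat \<Rightarrow> bool" where
  "doubling V E \<gamma> \<longleftrightarrow> (\<forall>u\<in>V. \<forall>\<rho>::real. \<exists>C. C \<subseteq> V \<and> card C \<le> \<gamma> \<and>
      cball_g V E u \<rho> \<subseteq> (\<Union>c\<in>C. cball_g V E c (\<rho> / 2)))"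

definition is_antipode :: "nat set \<Rightarrow> (nat \<Rightarrow> nat \<Rightarrow> bool) \<Rightarrow> (nat \<Rightarrow> nat) \<Rightarrow> nat \<Rightarrow> nat \<Rightarrow> bool" where
  "is_antipode V E r u a \<longleftrightarrow> a \<in> V \<and> (\<forall>w\<in>V. gdist E u w < gdist E u a \<or>
      (gdist E u w = gdist E u a \<and> r w \<le> r a))"

definition eL :: "(nat \<Rightarrow> nat \<Rightarrow> bool) \<Rightarrow> nat set \<Rightarrow> nat \<Rightarrow> nat" where
  "eL E L v = (if L = {} then 0 else Max (gdist E v ` L))"

definition eU :: "nat set \<Rightarrow> (nat \<Rightarrow> nat \<Rightarrow> bool) \<Rightarrow> nat set \<Rightarrow> nat \<Rightarrow> ereal" where
  "eU V E U v = (if U = {} then \<infinity> else ereal (real (Min ((\<lambda>x. gdist E v x + ecc V E x) ` U))))"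

text \<open>Execution prefixes of Algorithm 1. alg1 V E r L K us q h: after some iterations
  the sets are L, K, the selected nodes (in order) are us, q queries have been made,
  and h says whether the algorithm has halted.\<close>
inductive alg1 :: "nat set \<Rightarrow> (nat \<Rightarrow> nat \<Rightarrow> bool) \<Rightarrow> (nat \<Rightarrow> nat) \<Rightarrow>
    nat set \<Rightarrow> nat set \<Rightarrow> nat list \<Rightarrow> nat \<Rightarrow> bool \<Rightarrow> bool"
  for V E r where
  init: "alg1 V E r {} {} [] 0 False"
| halt: "\<lbrakk>alg1 V E r L K us q False; u \<in> V; \<forall>v\<in>V. eL E L u \<le> eL E L v;
          ecc V E u = eL E L u\<rbrakk> \<Longrightarrow> alg1 V E r L K (us @ [u]) (q + 1) True"
| step: "\<lbrakk>alg1 V E r L K us q False; u \<in> V; \<forall>v\<in>V. eL E L u \<le> eL E L v;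
          ecc V E u \<noteq> eL E L u; is_antipode V E r u a;
          h = (Min (eL E (insert a L) ` V) \<ge> Min (ecc V E ` insert u K))\<rbrakk>
        \<Longrightarrow> alg1 V E r (insert a L) (insert u K) (us @ [u]) (q + 2) h"

text \<open>Execution prefixes of Algorithm 3 (x is any node with d(u,x)+e(x)=e(u)).\<close>
inductive alg3 :: "nat set \<Rightarrow> (nat \<Rightarrow> nat \<Rightarrow> bool) \<Rightarrow>
    nat set \<Rightarrow> nat set \<Rightarrow> nat list \<Rightarrow> nat \<Rightarrow> bool \<Rightarrow> bool"
  for V E where
  init: "alg3 V E {} {} [] 0 False"
| step: "\<lbrakk>alg3 V E U K us q False; u \<in> V; \<forall>v\<in>V. eU V E U v \<le> eU V E U u;
          x \<in> V; gdist E u x + ecc V E x = ecc V E u;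
          h = (ereal (real (Max (ecc V E ` insert u K))) \<ge> Max (eU V E (insert x U) ` V))\<rbrakk>
        \<Longrightarrow> alg3 V E (insert x U) (insert u K) (us @ [u]) (q + 2) h"

end

theory Submission
  imports Defs
begin

text \<open>While Algorithm 1 has not found a node with
  eccentricity at most \<open>(1 + \<epsilon>) rad\<close>, every node \<open>u\<^sub>j\<close> selected after \<open>u\<^sub>i\<close> lies within
  \<open>rad\<close> of the antipode \<open>a\<^sub>i\<close>, so \<open>e(u\<^sub>i) = d(u\<^sub>i, a\<^sub>i) \<le> d(u\<^sub>i, u\<^sub>j) + rad\<close> forces
  \<open>d(u\<^sub>i, u\<^sub>j) > \<epsilon> rad\<close>. Likewise, while Algorithm 3 has not found a node with eccentricity at
  least \<open>(1 - \<epsilon>) diam\<close>, its selected nodes are pairwise more than \<open>\<epsilon> diam\<close> apart. In both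
  cases the selected nodes form an \<open>\<epsilon> R\<close>-separated set inside a ball of radius \<open>R\<close>; covering
  that ball by \<open>\<gamma>\<^sup>k\<close> balls of radius \<open>R / 2\<^sup>k \<le> \<epsilon> R / 2\<close> shows that there are at most
  \<open>\<gamma>\<^sup>k\<close> of them, with \<open>k = \<lceil>log\<^sub>2 (2 / \<epsilon>)\<rceil>\<close>. Each iteration costs at most two queries.\<close>

lemma gdist_walk:
  assumes "connected_graph V E" "u \<in> V" "v \<in> V"
  shows "\<exists>xs. length xs = Suc (gdist E u v) \<and> hd xs = u \<and> last xs = v \<and> successively E xs"
proof -
  from assms obtain xs where xs: "xs \<noteq> []" "hd xs = u" "last xs = v" "successively E xs"
    unfolding connected_graph_def by blast
  hence "\<exists>n xs. length xs = Suc n \<and> hd xs = u \<and> last xs = v \<and> successively E xs"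
    by (intro exI[of _ "length xs - 1"] exI[of _ xs]) auto
  thus ?thesis unfolding gdist_def by (rule LeastI_ex)
qed

lemma gdist_le_walk:
  "length xs = Suc n \<Longrightarrow> hd xs = u \<Longrightarrow> last xs = v \<Longrightarrow> successively E xs \<Longrightarrow> gdist E u v \<le> n"
  unfolding gdist_def by (rule Least_le) blast

lemma gdist_self [simp]: "gdist E u u = 0"
  using gdist_le_walk[of "[u]" 0 u u E] by simp

lemma gdist_commute:
  assumes "is_graph V E" "connected_graph V E" "u \<in> V" "v \<in> V"
  shows "gdist E u v = gdist E v u"
proof -
  have le: "gdist E y x \<le> gdist E x y" if xy: "x \<in> V" "y \<in> V" for x y
  proof -
    obtain xs where xs: "length xs = Suc (gdist E x y)" "hd xs = x" "last xs = y"
      "successively E xs"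
      using gdist_walk[OF assms(2) xy] by blast
    have "successively (\<lambda>x y. E y x) xs"
      using xs(4) by (rule successively_mono) (use assms(1) in \<open>auto simp: is_graph_def\<close>)
    moreover have "xs \<noteq> []" using xs(1) by auto
    ultimately show ?thesis
      using xs by (intro gdist_le_walk[of "rev xs"]) (auto simp: hd_rev last_rev)
  qed
  show ?thesis using le[of u v] le[of v u] assms(3,4) by simp
qed

lemma gdist_triangle:
  assumes "connected_graph V E" "u \<in> V" "v \<in> V" "w \<in> V"
  shows "gdist E u w \<le> gdist E u v + gdist E v w"
proof -
  obtain xs where xs: "length xs = Suc (gdist E u v)" "hd xs = u" "last xs = v" "successively E xs"
    using gdist_walk[OF assms(1-3)] by blast
  obtain ys where ys: "length ys = Suc (gdist E v w)" "hd ys = v" "last ys = w" "successively E ys"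
    using gdist_walk[OF assms(1,3,4)] by blast
  then obtain ys' where ys': "ys = v # ys'" by (cases ys) auto
  have "successively E (xs @ ys')"
    using xs(3,4) ys(4) ys' by (cases ys') (auto simp: successively_append_iff successively_Cons)
  moreover have "last (xs @ ys') = w" using xs ys ys' by (cases ys' rule: rev_cases) auto
  moreover have "hd (xs @ ys') = u" using xs by (cases xs) auto
  ultimately show ?thesis using gdist_le_walk[of "xs @ ys'"] xs(1) ys(1) ys' by simp
qed

lemma is_graph_finite: "is_graph V E \<Longrightarrow> finite V"
  and is_graph_nonempty: "is_graph V E \<Longrightarrow> V \<noteq> {}"
  unfolding is_graph_def by auto

lemma is_graph_finite_subset: "is_graph V E \<Longrightarrow> A \<subseteq> V \<Longrightarrow> finite A"
  using finite_subset is_graph_finite by blast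

lemma gdist_le_ecc: "is_graph V E \<Longrightarrow> v \<in> V \<Longrightarrow> gdist E u v \<le> ecc V E u"
  unfolding ecc_def by (intro Max_ge) (auto dest: is_graph_finite)

lemma ecc_attained: "is_graph V E \<Longrightarrow> \<exists>v\<in>V. gdist E u v = ecc V E u"
  unfolding ecc_def using Max_in[of "gdist E u ` V"]
  by (metis finite_imageI image_iff image_is_empty is_graph_finite is_graph_nonempty)

lemma ecc_le_gdist_plus_ecc:
  assumes "is_graph V E" "connected_graph V E" "z \<in> V" "x \<in> V"
  shows "ecc V E z \<le> gdist E z x + ecc V E x"
proof -
  obtain v where v: "v \<in> V" "gdist E z v = ecc V E z" using ecc_attained[OF assms(1)] by blast
  have "gdist E z v \<le> gdist E z x + gdist E x v" using gdist_triangle assms v by blast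
  also have "\<dots> \<le> gdist E z x + ecc V E x" using gdist_le_ecc[OF assms(1) v(1)] by simp
  finally show ?thesis using v by simp
qed

lemma rad_attained: "is_graph V E \<Longrightarrow> \<exists>c\<in>V. ecc V E c = rad V E"
  unfolding rad_def using Min_in[of "ecc V E ` V"]
  by (metis finite_imageI image_iff image_is_empty is_graph_finite is_graph_nonempty)

lemma diam_attained: "is_graph V E \<Longrightarrow> \<exists>z\<in>V. ecc V E z = diam V E"
  unfolding diam_def using Max_in[of "ecc V E ` V"]
  by (metis finite_imageI image_iff image_is_empty is_graph_finite is_graph_nonempty)

lemma ecc_le_diam: "is_graph V E \<Longrightarrow> v \<in> V \<Longrightarrow> ecc V E v \<le> diam V E"
  unfolding diam_def by (intro Max_ge) (auto dest: is_graph_finite)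

lemma gdist_le_eL: "finite L \<Longrightarrow> v \<in> L \<Longrightarrow> gdist E u v \<le> eL E L u"
  unfolding eL_def by (auto intro: Max_ge)

lemma eL_le_ecc: "is_graph V E \<Longrightarrow> L \<subseteq> V \<Longrightarrow> eL E L u \<le> ecc V E u"
  unfolding eL_def ecc_def
  using is_graph_finite by (auto intro!: Max_mono)

lemma eL_minimal_le_rad:
  assumes "is_graph V E" "L \<subseteq> V" "\<forall>v\<in>V. eL E L u \<le> eL E L v"
  shows "eL E L u \<le> rad V E"
proof -
  obtain c where "c \<in> V" "ecc V E c = rad V E" using rad_attained[OF assms(1)] by blast
  thus ?thesis using assms eL_le_ecc[OF assms(1,2), of c] by force
qed

lemma ecc_le_eU:
  assumes "is_graph V E" "connected_graph V E" "z \<in> V" "U \<subseteq> V"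
  shows "ereal (real (ecc V E z)) \<le> eU V E U z"
proof (cases "U = {}")
  case False
  have "finite U" using is_graph_finite_subset[OF assms(1,4)] .
  hence "ecc V E z \<le> Min ((\<lambda>x. gdist E z x + ecc V E x) ` U)"
    using False ecc_le_gdist_plus_ecc[OF assms(1-3)] assms(4) by (subst Min_ge_iff) auto
  thus ?thesis using False unfolding eU_def by simp
qed (simp add: eU_def)

lemma eU_le:
  assumes "finite U" "x \<in> U"
  shows "eU V E U v \<le> ereal (real (gdist E v x + ecc V E x))"
proof -
  have "Min ((\<lambda>x. gdist E v x + ecc V E x) ` U) \<le> gdist E v x + ecc V E x"
    using assms by (intro Min_le) auto
  hence "real (Min ((\<lambda>x. gdist E v x + ecc V E x) ` U)) \<le> real (gdist E v x + ecc V E x)"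
    by (rule of_nat_mono)
  moreover have "U \<noteq> {}" using assms(2) by auto
  ultimately show ?thesis unfolding eU_def by (simp only: if_False ereal_less_eq(3))
qed

lemma eU_maximal_ge_diam:
  assumes "is_graph V E" "connected_graph V E" "U \<subseteq> V" "\<forall>v\<in>V. eU V E U v \<le> eU V E U u"
  shows "ereal (real (diam V E)) \<le> eU V E U u"
proof -
  obtain z where "z \<in> V" "ecc V E z = diam V E" using diam_attained[OF assms(1)] by blast
  thus ?thesis using ecc_le_eU[OF assms(1,2) _ assms(3)] assms(4) by (metis order_trans)
qed

section \<open>Packing in doubling graphs\<close>

lemma doubling_ge_1:
  assumes "is_graph V E" "doubling V E \<gamma>"
  shows "1 \<le> \<gamma>"
proof -
  obtain u where u: "u \<in> V" using is_graph_nonempty[OF assms(1)] by blast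
  have "\<forall>\<rho>::real. \<exists>C. C \<subseteq> V \<and> card C \<le> \<gamma> \<and>
      cball_g V E u \<rho> \<subseteq> (\<Union>c\<in>C. cball_g V E c (\<rho> / 2))"
    using assms(2) u unfolding doubling_def by (rule bspec)
  then obtain C where C: "C \<subseteq> V" "card C \<le> \<gamma>"
    "cball_g V E u 0 \<subseteq> (\<Union>c\<in>C. cball_g V E c (0 / 2))"
    by blast
  have "u \<in> cball_g V E u 0" using u unfolding cball_g_def by simp
  hence "C \<noteq> {}" using C(3) by blast
  moreover have "finite C" using is_graph_finite_subset[OF assms(1) C(1)] .
  ultimately have "0 < card C" by (simp add: card_gt_0_iff)
  thus ?thesis using C(2) by linarith
qed

lemma doubling_iterated_cover:
  assumes "is_graph V E" "doubling V E \<gamma>" "a \<in> V"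
  shows "\<exists>C. C \<subseteq> V \<and> finite C \<and> card C \<le> \<gamma> ^ k \<and>
           cball_g V E a R \<subseteq> (\<Union>c\<in>C. cball_g V E c (R / 2 ^ k))"
proof (induction k)
  case 0
  show ?case using assms(3) by (intro exI[of _ "{a}"]) auto
next
  case (Suc k)
  then obtain C where C: "C \<subseteq> V" "finite C" "card C \<le> \<gamma> ^ k"
    "cball_g V E a R \<subseteq> (\<Union>c\<in>C. cball_g V E c (R / 2 ^ k))" by blast
  have "\<forall>c\<in>C. \<exists>D. D \<subseteq> V \<and> card D \<le> \<gamma> \<and>
      cball_g V E c (R / 2 ^ k) \<subseteq> (\<Union>d\<in>D. cball_g V E d (R / 2 ^ k / 2))"
    using assms(2) C(1) unfolding doubling_def by blast
  then obtain f where f: "\<And>c. c \<in> C \<Longrightarrow> f c \<subseteq> V \<and> card (f c) \<le> \<gamma> \<and>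
      cball_g V E c (R / 2 ^ k) \<subseteq> (\<Union>d\<in>f c. cball_g V E d (R / 2 ^ k / 2))"
    by metis
  have half: "R / 2 ^ k / 2 = R / 2 ^ Suc k" by simp
  define C' where "C' = (\<Union>c\<in>C. f c)"
  have "C' \<subseteq> V" using f unfolding C'_def by blast
  moreover from this have "finite C'" by (rule is_graph_finite_subset[OF assms(1)])
  moreover have "card C' \<le> \<gamma> ^ Suc k"
  proof -
    have "card C' \<le> (\<Sum>c\<in>C. card (f c))" unfolding C'_def using C(2) by (rule card_UN_le)
    also have "\<dots> \<le> card C * \<gamma>" using f sum_bounded_above[of C "\<lambda>c. card (f c)" \<gamma>] by auto
    also have "\<dots> \<le> \<gamma> ^ k * \<gamma>" using C(3) by simp
    finally show ?thesis by (simp add: mult.commute)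
  qed
  moreover have "cball_g V E a R \<subseteq> (\<Union>d\<in>C'. cball_g V E d (R / 2 ^ Suc k))"
  proof
    fix v assume "v \<in> cball_g V E a R"
    then obtain c where c: "c \<in> C" "v \<in> cball_g V E c (R / 2 ^ k)" using C(4) by blast
    then obtain d where "d \<in> f c" "v \<in> cball_g V E d (R / 2 ^ k / 2)" using f[OF c(1)] by blast
    thus "v \<in> (\<Union>d\<in>C'. cball_g V E d (R / 2 ^ Suc k))" using c(1) unfolding C'_def half by blast
  qed
  ultimately show ?case by (intro exI[of _ C'] conjI)
qed

lemma separated_set_card_le:
  assumes G: "is_graph V E" "connected_graph V E" and D: "doubling V E \<gamma>" and a: "a \<in> V"
    and P: "P \<subseteq> cball_g V E a R"
    and sep: "\<And>x y. x \<in> P \<Longrightarrow> y \<in> P \<Longrightarrow> x \<noteq> y \<Longrightarrow> \<delta> < real (gdist E x y)"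
    and k: "2 * (R / 2 ^ k) \<le> \<delta>"
  shows "card P \<le> \<gamma> ^ k"
proof -
  obtain C where C: "C \<subseteq> V" "finite C" "card C \<le> \<gamma> ^ k"
    "cball_g V E a R \<subseteq> (\<Union>c\<in>C. cball_g V E c (R / 2 ^ k))"
    using doubling_iterated_cover[OF G(1) D a, of k R] by blast
  have "\<forall>p\<in>P. \<exists>c\<in>C. p \<in> cball_g V E c (R / 2 ^ k)" using P C(4) by (simp add: subset_iff)
  then obtain g where g: "\<And>p. p \<in> P \<Longrightarrow> g p \<in> C" "\<And>p. p \<in> P \<Longrightarrow> p \<in> cball_g V E (g p) (R / 2 ^ k)"
    by metis
  have "inj_on g P"
  proof (rule inj_onI, rule ccontr)
    fix x y assume xy: "x \<in> P" "y \<in> P" "g x = g y" "x \<noteq> y"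
    have cV: "g x \<in> V" using g(1)[OF xy(1)] C(1) by blast
    have xV: "x \<in> V" and yV: "y \<in> V" and dx: "real (gdist E (g x) x) \<le> R / 2 ^ k"
      and dy: "real (gdist E (g x) y) \<le> R / 2 ^ k"
      using g(2)[OF xy(1)] g(2)[OF xy(2)] xy(3) unfolding cball_g_def by auto
    have "gdist E x y \<le> gdist E (g x) x + gdist E (g x) y"
      using gdist_triangle[OF G(2) xV cV yV] gdist_commute[OF G xV cV] by simp
    hence "real (gdist E x y) \<le> \<delta>" using dx dy k by linarith
    thus False using sep[OF xy(1,2,4)] by simp
  qed
  hence "card P \<le> card C" using card_inj_on_le[of g P C] g(1) C(2) by blast
  thus ?thesis using C(3) by simp
qed

lemma separated_list_length_le:
  assumes G: "is_graph V E" "connected_graph V E" and D: "doubling V E \<gamma>" and a: "a \<in> V"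
    and ps: "set ps \<subseteq> cball_g V E a R"
    and sep: "\<And>i j. i < j \<Longrightarrow> j < length ps \<Longrightarrow> \<delta> < real (gdist E (ps ! i) (ps ! j))"
    and \<delta>: "0 \<le> \<delta>" and k: "2 * (R / 2 ^ k) \<le> \<delta>"
  shows "length ps \<le> \<gamma> ^ k"
proof -
  have V: "i < length ps \<Longrightarrow> ps ! i \<in> V" for i using ps nth_mem unfolding cball_g_def by blast
  have sep': "\<delta> < real (gdist E (ps ! i) (ps ! j))"
    if ij: "i < length ps" "j < length ps" "i \<noteq> j" for i j
  proof (cases "i < j")
    case False
    hence "j < i" using ij(3) by simp
    thus ?thesis using sep[of j i] ij gdist_commute[OF G V[OF ij(1)] V[OF ij(2)]] by simp
  qed (use sep ij in blast)
  have "distinct ps"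
    unfolding distinct_conv_nth
  proof (intro allI impI notI)
    fix i j assume "i < length ps" "j < length ps" "i \<noteq> j" "ps ! i = ps ! j"
    thus False using sep'[of i j] \<delta> by simp
  qed
  moreover have "card (set ps) \<le> \<gamma> ^ k"
  proof (rule separated_set_card_le[OF G D a ps _ k])
    fix x y assume "x \<in> set ps" "y \<in> set ps" "x \<noteq> y"
    then obtain i j where "i < length ps" "j < length ps" "x = ps ! i" "y = ps ! j"
      by (auto simp: in_set_conv_nth)
    thus "\<delta> < real (gdist E x y)" using sep' \<open>x \<noteq> y\<close> by blast
  qed
  ultimately show ?thesis by (simp add: distinct_card)
qed

lemma two_div_power_ceiling_log_le:
  assumes "\<epsilon> > (0::real)"
  shows "2 / 2 ^ nat \<lceil>log 2 (2 / \<epsilon>)\<rceil> \<le> \<epsilon>"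
proof -
  define k where "k = nat \<lceil>log 2 (2 / \<epsilon>)\<rceil>"
  have "2 / \<epsilon> = 2 powr (log 2 (2 / \<epsilon>))" using assms by simp
  also have "\<dots> \<le> 2 powr (real k)" unfolding k_def by (intro powr_mono) linarith+
  finally have "2 \<le> 2 ^ k * \<epsilon>" using assms by (simp add: powr_realpow divide_le_eq)
  thus ?thesis unfolding k_def[symmetric] by (simp add: divide_le_eq mult.commute)
qed

section \<open>Algorithm 1\<close>

text \<open>\<open>as ! i\<close> is the antipode queried in the iteration that selected \<open>us ! i\<close>.\<close>

definition antipode_list :: "nat set \<Rightarrow> (nat \<Rightarrow> nat \<Rightarrow> bool) \<Rightarrow> nat list \<Rightarrow> nat list \<Rightarrow> bool" where
  "antipode_list V E us as \<longleftrightarrow> length as = length us \<and>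
     (\<forall>i<length us. gdist E (us ! i) (as ! i) = ecc V E (us ! i)) \<and>
     (\<forall>i j. i < j \<longrightarrow> j < length us \<longrightarrow> gdist E (us ! j) (as ! i) \<le> rad V E)"

lemma antipode_list_snoc:
  assumes "antipode_list V E us as" "gdist E u a = ecc V E u" "\<forall>b\<in>set as. gdist E u b \<le> rad V E"
  shows "antipode_list V E (us @ [u]) (as @ [a])"
proof -
  have len: "length as = length us"
    and ant: "\<And>i. i < length us \<Longrightarrow> gdist E (us ! i) (as ! i) = ecc V E (us ! i)"
    and near: "\<And>i j. i < j \<Longrightarrow> j < length us \<Longrightarrow> gdist E (us ! j) (as ! i) \<le> rad V E"
    using assms(1) unfolding antipode_list_def by auto
  have "gdist E ((us @ [u]) ! i) ((as @ [a]) ! i) = ecc V E ((us @ [u]) ! i)"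
    if "i < Suc (length us)" for i
    using that ant[of i] assms(2) len by (cases "i < length us") (simp_all add: nth_append)
  moreover have "gdist E ((us @ [u]) ! j) ((as @ [a]) ! i) \<le> rad V E"
    if "i < j" "j < Suc (length us)" for i j
    using that near[of i j] assms(3) nth_mem[of i as] len
    by (cases "j < length us") (simp_all add: nth_append)
  ultimately show ?thesis using len unfolding antipode_list_def by simp
qed

lemma is_antipode_gdist:
  assumes "is_graph V E" "is_antipode V E r u a"
  shows "gdist E u a = ecc V E u"
proof -
  have aV: "a \<in> V" using assms(2) unfolding is_antipode_def by blast
  obtain v where v: "v \<in> V" "gdist E u v = ecc V E u" using ecc_attained[OF assms(1)] by blast
  have "gdist E u v \<le> gdist E u a" using assms(2) v(1) unfolding is_antipode_def by fastforce
  thus ?thesis using v gdist_le_ecc[OF assms(1) aV, of u] by simp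
qed

lemma alg1_queries_le: "alg1 V E r L K us q h \<Longrightarrow> q \<le> 2 * length us"
  by (induction rule: alg1.induct) auto

lemma alg1_subsets: "alg1 V E r L K us q h \<Longrightarrow> set us \<subseteq> V \<and> L \<subseteq> V \<and> K \<subseteq> set us"
  by (induction rule: alg1.induct) (auto simp: is_antipode_def)

lemma alg1_halted:
  assumes G: "is_graph V E" and run: "alg1 V E r L K us q True"
  shows "\<exists>u\<in>set us. ecc V E u \<le> rad V E"
  using run
proof cases
  case (halt us' q' u)
  have "L \<subseteq> V" using alg1_subsets[OF \<open>alg1 V E r L K us' q' False\<close>] by blast
  hence "ecc V E u \<le> rad V E" using eL_minimal_le_rad[OF G] halt by simp
  thus ?thesis using halt by auto
next
  case (step L' K' us' q' u a)
  obtain c where c: "c \<in> V" "ecc V E c = rad V E" using rad_attained[OF G] by blast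
  have "L' \<subseteq> V" "K' \<subseteq> set us'" using alg1_subsets[OF \<open>alg1 V E r L' K' us' q' False\<close>] by auto
  moreover have "a \<in> V" using \<open>is_antipode V E r u a\<close> by (simp add: is_antipode_def)
  ultimately have sub: "L \<subseteq> V" "K \<subseteq> set us" using step by auto
  have "Min (eL E L ` V) \<le> eL E L c" using c(1) is_graph_finite[OF G] by (intro Min_le) auto
  also have "\<dots> \<le> rad V E" using eL_le_ecc[OF G sub(1)] c(2) by metis
  finally have "Min (ecc V E ` K) \<le> rad V E" using step by simp
  moreover have "Min (ecc V E ` K) \<in> ecc V E ` K"
    using step sub(2) by (intro Min_in) (auto intro: finite_subset)
  ultimately show ?thesis using sub(2) by auto
qed simp

lemma alg1_antipode_list:
  assumes G: "is_graph V E"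
  shows "alg1 V E r L K us q h \<Longrightarrow> \<not> h \<Longrightarrow> \<exists>as. set as = L \<and> antipode_list V E us as"
proof (induction rule: alg1.induct)
  case init
  show ?case by (simp add: antipode_list_def)
next
  case (step L K us q u a h)
  then obtain as where as: "set as = L" "antipode_list V E us as" by blast
  have LV: "L \<subseteq> V" using alg1_subsets[OF step.hyps(1)] by blast
  have "gdist E u b \<le> rad V E" if "b \<in> set as" for b
    using gdist_le_eL[OF is_graph_finite_subset[OF G LV], of b E u] that as(1)
      eL_minimal_le_rad[OF G LV step.hyps(3)] by simp
  thus ?case using antipode_list_snoc[OF as(2) is_antipode_gdist[OF G step.hyps(5)]] as(1)
    by (intro exI[of _ "as @ [a]"]) auto
qed simp

lemma alg1_running_length_le:
  assumes G: "is_graph V E" "connected_graph V E" and D: "doubling V E \<gamma>" and \<epsilon>: "\<epsilon> > 0"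
    and run: "alg1 V E r L K us q False"
    and far: "\<forall>u\<in>set us. (1 + \<epsilon>) * real (rad V E) < real (ecc V E u)"
  shows "length us \<le> \<gamma> ^ nat \<lceil>log 2 (2 / \<epsilon>)\<rceil> + 1"
proof (cases us)
  case (Cons u0 us')
  define R where "R = real (rad V E)"
  obtain as where as: "set as = L" "antipode_list V E us as"
    using alg1_antipode_list[OF G(1) run] by blast
  have len: "length as = length us"
    and ant: "\<And>i. i < length us \<Longrightarrow> gdist E (us ! i) (as ! i) = ecc V E (us ! i)"
    and near: "\<And>i j. i < j \<Longrightarrow> j < length us \<Longrightarrow> gdist E (us ! j) (as ! i) \<le> rad V E"
    using as(2) unfolding antipode_list_def by auto
  have usV: "\<And>i. i < length us \<Longrightarrow> us ! i \<in> V" and asV: "\<And>i. i < length us \<Longrightarrow> as ! i \<in> V"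
    using alg1_subsets[OF run] as(1) len by auto
  have a0: "as ! 0 \<in> V" using asV Cons by simp
  txt \<open>Only the nodes selected after \<open>u0\<close> are known to lie within \<open>rad\<close> of \<open>as ! 0\<close>.\<close>
  have "length us' \<le> \<gamma> ^ nat \<lceil>log 2 (2 / \<epsilon>)\<rceil>"
  proof (rule separated_list_length_le[OF G D a0, where R = R and \<delta> = "\<epsilon> * R"])
    show "set us' \<subseteq> cball_g V E (as ! 0) R"
    proof
      fix v assume "v \<in> set us'"
      then obtain j where j: "Suc j < length us" "v = us ! Suc j"
        using Cons by (auto simp: in_set_conv_nth)
      hence "gdist E (as ! 0) v \<le> rad V E" using near[of 0 "Suc j"] gdist_commute[OF G a0 usV] by simp
      thus "v \<in> cball_g V E (as ! 0) R" using usV j unfolding cball_g_def R_def by simp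
    qed
  next
    fix i j assume ij: "i < j" "j < length us'"
    let ?ui = "us ! Suc i" and ?uj = "us ! Suc j" and ?ai = "as ! Suc i"
    have I: "Suc i < length us" and J: "Suc j < length us" using ij Cons by auto
    have "ecc V E ?ui = gdist E ?ui ?ai" using ant[OF I] by simp
    also have "\<dots> \<le> gdist E ?ui ?uj + gdist E ?uj ?ai"
      using gdist_triangle[OF G(2) usV[OF I] usV[OF J] asV[OF I]] .
    also have "\<dots> \<le> gdist E ?ui ?uj + rad V E" using near ij J by simp
    finally have "real (ecc V E ?ui) \<le> real (gdist E ?ui ?uj) + R" unfolding R_def by linarith
    moreover have "(1 + \<epsilon>) * R < real (ecc V E ?ui)" using far I unfolding R_def by simp
    ultimately show "\<epsilon> * R < real (gdist E (us' ! i) (us' ! j))"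
      using Cons by (simp add: distrib_right)
  next
    show "0 \<le> \<epsilon> * R" using \<epsilon> unfolding R_def by simp
    show "2 * (R / 2 ^ nat \<lceil>log 2 (2 / \<epsilon>)\<rceil>) \<le> \<epsilon> * R"
      using mult_right_mono[OF two_div_power_ceiling_log_le[OF \<epsilon>], of R] unfolding R_def by simp
  qed
  thus ?thesis using Cons by simp
qed simp

section \<open>Algorithm 3\<close>

text \<open>\<open>xs ! i\<close> is the node \<open>x\<close> queried in the iteration that selected \<open>us ! i\<close>.\<close>

definition ecc_witness_list :: "nat set \<Rightarrow> (nat \<Rightarrow> nat \<Rightarrow> bool) \<Rightarrow> nat list \<Rightarrow> nat list \<Rightarrow> bool" where
  "ecc_witness_list V E us xs \<longleftrightarrow> length xs = length us \<and>
     (\<forall>i<length us. gdist E (us ! i) (xs ! i) + ecc V E (xs ! i) = ecc V E (us ! i)) \<and>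
     (\<forall>i j. i < j \<longrightarrow> j < length us \<longrightarrow> diam V E \<le> gdist E (us ! j) (xs ! i) + ecc V E (xs ! i))"

lemma ecc_witness_list_snoc:
  assumes "ecc_witness_list V E us xs" "gdist E u x + ecc V E x = ecc V E u"
    "\<forall>y\<in>set xs. diam V E \<le> gdist E u y + ecc V E y"
  shows "ecc_witness_list V E (us @ [u]) (xs @ [x])"
proof -
  have len: "length xs = length us"
    and wit: "\<And>i. i < length us \<Longrightarrow> gdist E (us ! i) (xs ! i) + ecc V E (xs ! i) = ecc V E (us ! i)"
    and far: "\<And>i j. i < j \<Longrightarrow> j < length us \<Longrightarrow> diam V E \<le> gdist E (us ! j) (xs ! i) + ecc V E (xs ! i)"
    using assms(1) unfolding ecc_witness_list_def by auto
  have "gdist E ((us @ [u]) ! i) ((xs @ [x]) ! i) + ecc V E ((xs @ [x]) ! i) = ecc V E ((us @ [u]) ! i)"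
    if "i < Suc (length us)" for i
    using that wit[of i] assms(2) len by (cases "i < length us") (simp_all add: nth_append)
  moreover have "diam V E \<le> gdist E ((us @ [u]) ! j) ((xs @ [x]) ! i) + ecc V E ((xs @ [x]) ! i)"
    if "i < j" "j < Suc (length us)" for i j
    using that far[of i j] assms(3) nth_mem[of i xs] len
    by (cases "j < length us") (simp_all add: nth_append)
  ultimately show ?thesis using len unfolding ecc_witness_list_def by simp
qed

lemma alg3_queries_eq: "alg3 V E U K us q h \<Longrightarrow> q = 2 * length us"
  by (induction rule: alg3.induct) auto

lemma alg3_subsets: "alg3 V E U K us q h \<Longrightarrow> set us \<subseteq> V \<and> U \<subseteq> V \<and> K \<subseteq> set us"
  by (induction rule: alg3.induct) auto

lemma alg3_halted:
  assumes G: "is_graph V E" "connected_graph V E" and run: "alg3 V E U K us q True"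
  shows "\<exists>u\<in>set us. diam V E \<le> ecc V E u"
  using run
proof cases
  case (step U' K' us' q' u x)
  obtain z where z: "z \<in> V" "ecc V E z = diam V E" using diam_attained[OF G(1)] by blast
  have "U' \<subseteq> V" "K' \<subseteq> set us'" using alg3_subsets[OF \<open>alg3 V E U' K' us' q' False\<close>] by auto
  hence sub: "U \<subseteq> V" "K \<subseteq> set us" using step by auto
  have "ereal (real (diam V E)) \<le> eU V E U z" using ecc_le_eU[OF G z(1) sub(1)] z(2) by simp
  also have "\<dots> \<le> Max (eU V E U ` V)" using z(1) is_graph_finite[OF G(1)] by (intro Max_ge) auto
  also have "\<dots> \<le> ereal (real (Max (ecc V E ` K)))" using step by simp
  finally have "diam V E \<le> Max (ecc V E ` K)" by simp
  moreover have "Max (ecc V E ` K) \<in> ecc V E ` K"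
    using step sub(2) by (intro Max_in) (auto intro: finite_subset)
  ultimately show ?thesis using sub(2) by auto
qed simp

lemma alg3_ecc_witness_list:
  assumes G: "is_graph V E" "connected_graph V E"
  shows "alg3 V E U K us q h \<Longrightarrow> \<not> h \<Longrightarrow> \<exists>xs. set xs = U \<and> ecc_witness_list V E us xs"
proof (induction rule: alg3.induct)
  case init
  show ?case by (simp add: ecc_witness_list_def)
next
  case (step U K us q u x h)
  then obtain xs where xs: "set xs = U" "ecc_witness_list V E us xs" by blast
  have UV: "U \<subseteq> V" using alg3_subsets[OF step.hyps(1)] by blast
  have "diam V E \<le> gdist E u y + ecc V E y" if "y \<in> set xs" for y
  proof -
    have "ereal (real (diam V E)) \<le> eU V E U u" using eU_maximal_ge_diam[OF G UV step.hyps(3)] .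
    also have "\<dots> \<le> ereal (real (gdist E u y + ecc V E y))"
      using eU_le[OF is_graph_finite_subset[OF G(1) UV]] that xs(1) by simp
    finally show ?thesis by simp
  qed
  thus ?case using ecc_witness_list_snoc[OF xs(2) step.hyps(5)] xs(1)
    by (intro exI[of _ "xs @ [x]"]) auto
qed

lemma alg3_running_length_le:
  assumes G: "is_graph V E" "connected_graph V E" and D: "doubling V E \<gamma>" and \<epsilon>: "\<epsilon> > 0"
    and run: "alg3 V E U K us q False"
    and near: "\<forall>u\<in>set us. real (ecc V E u) < (1 - \<epsilon>) * real (diam V E)"
  shows "length us \<le> \<gamma> ^ nat \<lceil>log 2 (2 / \<epsilon>)\<rceil>"
proof (cases us)
  case (Cons u0 us')
  define R where "R = real (diam V E)"
  obtain xs where xs: "set xs = U" "ecc_witness_list V E us xs"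
    using alg3_ecc_witness_list[OF G run] by blast
  have len: "length xs = length us"
    and wit: "\<And>i. i < length us \<Longrightarrow> gdist E (us ! i) (xs ! i) + ecc V E (xs ! i) = ecc V E (us ! i)"
    and far: "\<And>i j. i < j \<Longrightarrow> j < length us \<Longrightarrow> diam V E \<le> gdist E (us ! j) (xs ! i) + ecc V E (xs ! i)"
    using xs(2) unfolding ecc_witness_list_def by auto
  have usV: "\<And>i. i < length us \<Longrightarrow> us ! i \<in> V" and xsV: "\<And>i. i < length us \<Longrightarrow> xs ! i \<in> V"
    using alg3_subsets[OF run] xs(1) len by auto
  have u0: "us ! 0 \<in> V" using usV[of 0] Cons by simp
  show ?thesis
  proof (rule separated_list_length_le[OF G D u0, where R = R and \<delta> = "\<epsilon> * R"])
    show "set us \<subseteq> cball_g V E (us ! 0) R"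
    proof
      fix v assume v: "v \<in> set us"
      hence "v \<in> V" using alg3_subsets[OF run] by blast
      hence "gdist E (us ! 0) v \<le> diam V E"
        using gdist_le_ecc[OF G(1)] ecc_le_diam[OF G(1) u0] order_trans by blast
      thus "v \<in> cball_g V E (us ! 0) R" using \<open>v \<in> V\<close> unfolding cball_g_def R_def by simp
    qed
  next
    fix i j assume ij: "i < j" "j < length us"
    let ?ui = "us ! i" and ?uj = "us ! j" and ?xi = "xs ! i"
    have I: "i < length us" using ij by simp
    have "diam V E \<le> gdist E ?uj ?xi + ecc V E ?xi" using far[OF ij] .
    also have "\<dots> \<le> gdist E ?uj ?ui + gdist E ?ui ?xi + ecc V E ?xi"
      using gdist_triangle[OF G(2) usV[OF ij(2)] usV[OF I] xsV[OF I]] by simp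
    also have "\<dots> = gdist E ?ui ?uj + ecc V E ?ui"
      using wit[OF I] gdist_commute[OF G usV[OF ij(2)] usV[OF I]] by simp
    finally have "R \<le> real (gdist E ?ui ?uj) + real (ecc V E ?ui)" unfolding R_def by linarith
    moreover have "real (ecc V E ?ui) < (1 - \<epsilon>) * R" using near I unfolding R_def by simp
    ultimately show "\<epsilon> * R < real (gdist E ?ui ?uj)" by (simp add: left_diff_distrib)
  next
    show "0 \<le> \<epsilon> * R" using \<epsilon> unfolding R_def by simp
    show "2 * (R / 2 ^ nat \<lceil>log 2 (2 / \<epsilon>)\<rceil>) \<le> \<epsilon> * R"
      using mult_right_mono[OF two_div_power_ceiling_log_le[OF \<epsilon>], of R] unfolding R_def by simp
  qed
qed simp

lemma real_power_ge_1_mono: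
  assumes "1 \<le> (g::nat)"
  shows "1 \<le> real g ^ k \<and> real g ^ k \<le> real g ^ (k + 1)"
proof -
  have "1 \<le> real g" using assms by simp
  thus ?thesis by (simp add: power_increasing)
qed

lemma alg1_finds_near_center:
  assumes G: "is_graph V E" "connected_graph V E" and D: "doubling V E \<gamma>" and \<epsilon>: "\<epsilon> > 0"
    and run: "alg1 V E r L K us q h"
    and stop: "h \<or> real q \<ge> 5 * real \<gamma> ^ (nat \<lceil>log 2 (2 / \<epsilon>)\<rceil> + 1)"
  shows "\<exists>u\<in>set us. real (ecc V E u) \<le> (1 + \<epsilon>) * real (rad V E)"
proof (rule ccontr)
  assume "\<not> ?thesis"
  hence far: "\<forall>u\<in>set us. (1 + \<epsilon>) * real (rad V E) < real (ecc V E u)" by (auto simp: not_le)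
  have "\<not> h"
  proof
    assume h
    with run have "alg1 V E r L K us q True" by simp
    then obtain u where u: "u \<in> set us" "ecc V E u \<le> rad V E"
      using alg1_halted[OF G(1)] by blast
    have "real (rad V E) \<le> (1 + \<epsilon>) * real (rad V E)" using \<epsilon> by (simp add: distrib_right)
    moreover have "(1 + \<epsilon>) * real (rad V E) < real (ecc V E u)" using far u(1) by blast
    ultimately show False using u(2) by linarith
  qed
  define k where "k = nat \<lceil>log 2 (2 / \<epsilon>)\<rceil>"
  have "length us \<le> \<gamma> ^ k + 1"
    using alg1_running_length_le[OF G D \<epsilon>] run \<open>\<not> h\<close> far unfolding k_def by simp
  hence "real (length us) \<le> real (\<gamma> ^ k + 1)" by (rule of_nat_mono)
  hence "real (length us) \<le> real \<gamma> ^ k + 1" by simp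
  moreover have "real q \<le> 2 * real (length us)" using alg1_queries_le[OF run] by simp
  moreover have "1 \<le> real \<gamma> ^ k" "real \<gamma> ^ k \<le> real \<gamma> ^ (k + 1)"
    using real_power_ge_1_mono[OF doubling_ge_1[OF G(1) D]] by auto
  ultimately show False using stop \<open>\<not> h\<close> unfolding k_def[symmetric] by linarith
qed

lemma alg3_finds_near_peripheral:
  assumes G: "is_graph V E" "connected_graph V E" and D: "doubling V E \<gamma>" and \<epsilon>: "\<epsilon> > 0"
    and run: "alg3 V E U K us q h"
    and stop: "h \<or> real q \<ge> 5 * real \<gamma> ^ (nat \<lceil>log 2 (2 / \<epsilon>)\<rceil> + 1)"
  shows "\<exists>u\<in>set us. real (ecc V E u) \<ge> (1 - \<epsilon>) * real (diam V E)"
proof (rule ccontr)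
  assume "\<not> ?thesis"
  hence near: "\<forall>u\<in>set us. real (ecc V E u) < (1 - \<epsilon>) * real (diam V E)" by (auto simp: not_le)
  have "\<not> h"
  proof
    assume h
    with run have "alg3 V E U K us q True" by simp
    then obtain u where u: "u \<in> set us" "diam V E \<le> ecc V E u"
      using alg3_halted[OF G] by blast
    have "(1 - \<epsilon>) * real (diam V E) \<le> real (diam V E)" using \<epsilon> by (simp add: left_diff_distrib)
    moreover have "real (ecc V E u) < (1 - \<epsilon>) * real (diam V E)" using near u(1) by blast
    ultimately show False using u(2) by linarith
  qed
  define k where "k = nat \<lceil>log 2 (2 / \<epsilon>)\<rceil>"
  have "length us \<le> \<gamma> ^ k"
    using alg3_running_length_le[OF G D \<epsilon>] run \<open>\<not> h\<close> near unfolding k_def by simp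
  hence "real (length us) \<le> real (\<gamma> ^ k)" by (rule of_nat_mono)
  hence "real (length us) \<le> real \<gamma> ^ k" by simp
  moreover have "real q = 2 * real (length us)" using alg3_queries_eq[OF run] by simp
  moreover have "1 \<le> real \<gamma> ^ k" "real \<gamma> ^ k \<le> real \<gamma> ^ (k + 1)"
    using real_power_ge_1_mono[OF doubling_ge_1[OF G(1) D]] by auto
  ultimately show False using stop \<open>\<not> h\<close> unfolding k_def[symmetric] by linarith
qed

theorem proposition3:
  "\<exists>C::real. C > 0 \<and>
    (\<forall>V E (\<gamma>::nat) (\<epsilon>::real) (r::nat \<Rightarrow> nat).
       is_graph V E \<and> connected_graph V E \<and> doubling V E \<gamma> \<and> \<epsilon> > 0 \<and> inj_on r V \<longrightarrow>
       (\<forall>L K us q h. alg1 V E r L K us q h \<and>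
            (h \<or> real q \<ge> C * real \<gamma> ^ (nat \<lceil>log 2 (2 / \<epsilon>)\<rceil> + 1)) \<longrightarrow>
          (\<exists>u\<in>set us. real (ecc V E u) \<le> (1 + \<epsilon>) * real (rad V E))) \<and>
       (\<forall>U K us q h. alg3 V E U K us q h \<and>
            (h \<or> real q \<ge> C * real \<gamma> ^ (nat \<lceil>log 2 (2 / \<epsilon>)\<rceil> + 1)) \<longrightarrow>
          (\<exists>u\<in>set us. real (ecc V E u) \<ge> (1 - \<epsilon>) * real (diam V E))))"
proof (intro exI[of _ "5::real"] conjI allI impI)
  txt \<open>The ranking only breaks ties between antipodes.\<close>
  fix V E \<gamma> \<epsilon> and r :: "nat \<Rightarrow> nat" and L K us q h
  assume "is_graph V E \<and> connected_graph V E \<and> doubling V E \<gamma> \<and> \<epsilon> > 0 \<and> inj_on r V"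
    and "alg1 V E r L K us q h \<and> (h \<or> real q \<ge> 5 * real \<gamma> ^ (nat \<lceil>log 2 (2 / \<epsilon>)\<rceil> + 1))"
  thus "\<exists>u\<in>set us. real (ecc V E u) \<le> (1 + \<epsilon>) * real (rad V E)"
    using alg1_finds_near_center by blast
next
  fix V E \<gamma> \<epsilon> and r :: "nat \<Rightarrow> nat" and U K us q h
  assume "is_graph V E \<and> connected_graph V E \<and> doubling V E \<gamma> \<and> \<epsilon> > 0 \<and> inj_on r V"
    and "alg3 V E U K us q h \<and> (h \<or> real q \<ge> 5 * real \<gamma> ^ (nat \<lceil>log 2 (2 / \<epsilon>)\<rceil> + 1))"
  thus "\<exists>u\<in>set us. real (ecc V E u) \<ge> (1 - \<epsilon>) * real (diam V E)"
    using alg3_finds_near_peripheral by blast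
qed simp

end
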